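(* Let $\mathbb{K}$ be a field of characteristic not $2$ or $3$ and let $\mathbb{A}$ be a commutative algebra over $\mathbb{K}$. Then $\mathbb{A}$ satisfies $(xy)^2=x^2y^2$ for all $x,y\in\mathbb{A}$ if and only if it satisfies $(xy)(zw)=(xz)(yw)$ for all $x,y,z,w\in\mathbb{A}$.
   Context: The algebra is possibly nonassociative; $x^2=xx$. *)

theory Defs
  imports Complex_Main
begin

end

theory Submission
  imports Defs
begin

text \<open>Polarizing \<open>(xy)\<^sup>2 = x\<^sup>2y\<^sup>2\<close> first in \<open>x\<close> and then in \<open>y\<close> gives
  \<open>(ab)(cd) + (ad)(cb) = 2 (ac)(bd)\<close> (division by 2 is needed after the first step).
  With \<open>A = (ab)(cd)\<close>, \<open>B = (ac)(bd)\<close>, \<open>C = (ad)(bc)\<close> this reads \<open>A + C = 2B\<close>, and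
  exchanging \<open>b\<close> and \<open>c\<close> gives \<open>B + C = 2A\<close>; subtracting, \<open>3(A - B) = 0\<close>, so \<open>A = B\<close>.\<close>

context vector_space
begin

lemma double_eq_0_imp_eq_0:
  fixes x :: 'b
  assumes "(2::'a) \<noteq> 0" and "x + x = 0"
  shows "x = 0"
proof -
  have "scale 2 x = scale (1 + 1) x"
    by simp
  also have "\<dots> = x + x"
    by (simp only: scale_left_distrib scale_one)
  finally have "scale 2 x = x + x" .
  with assms show ?thesis by simp
qed

lemma triple_eq_0_imp_eq_0:
  fixes x :: 'b
  assumes "(3::'a) \<noteq> 0" and "x + x + x = 0"
  shows "x = 0"
proof -
  have "scale 3 x = scale (1 + 1 + 1) x"
    by simp
  also have "\<dots> = x + x + x"
    by (simp only: scale_left_distrib scale_one)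
  finally have "scale 3 x = x + x + x" .
  with assms show ?thesis by simp
qed

end

locale comm_biadditive =
  fixes mul :: "'a::ab_group_add \<Rightarrow> 'a \<Rightarrow> 'a"
  assumes mul_add_left: "mul (x + y) z = mul x z + mul y z"
    and mul_commute: "mul x y = mul y x"
begin

lemma mul_add_right: "mul x (y + z) = mul x y + mul x z"
  by (metis mul_add_left mul_commute)

lemma square_mul_polarize_left:
  assumes square_mul: "\<And>x y. mul (mul x y) (mul x y) = mul (mul x x) (mul y y)"
    and no_2_torsion: "\<And>v::'a. v + v = 0 \<Longrightarrow> v = 0"
  shows "mul (mul x y) (mul x' y) = mul (mul x x') (mul y y)"
proof -
  let ?d = "mul (mul x y) (mul x' y) - mul (mul x x') (mul y y)"
  have "mul (mul (x + x') y) (mul (x + x') y) = mul (mul (x + x') (x + x')) (mul y y)"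
    by (rule square_mul)
  then have "?d + ?d = 0"
    using square_mul[of x y] square_mul[of x' y] mul_commute[of x' x]
      mul_commute[of "mul x' y" "mul x y"]
    by (simp add: mul_add_left mul_add_right algebra_simps)
  then have "?d = 0"
    by (rule no_2_torsion)
  then show ?thesis
    by simp
qed

lemma square_mul_polarize:
  assumes square_mul: "\<And>x y. mul (mul x y) (mul x y) = mul (mul x x) (mul y y)"
    and no_2_torsion: "\<And>v::'a. v + v = 0 \<Longrightarrow> v = 0"
  shows "mul (mul a b) (mul c d) + mul (mul a d) (mul c b)
           = mul (mul a c) (mul b d) + mul (mul a c) (mul b d)"
proof -
  note polarized = square_mul_polarize_left[OF square_mul no_2_torsion]
  have "mul (mul a (b + d)) (mul c (b + d))
          = mul (mul a b) (mul c b) + mul (mul a b) (mul c d)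
            + mul (mul a d) (mul c b) + mul (mul a d) (mul c d)"
    by (simp add: mul_add_left mul_add_right add.assoc)
  moreover have "mul (mul a c) (mul (b + d) (b + d))
          = mul (mul a c) (mul b b) + mul (mul a c) (mul b d)
            + mul (mul a c) (mul b d) + mul (mul a c) (mul d d)"
    by (simp add: mul_add_left mul_add_right add.assoc mul_commute[of d b])
  ultimately show ?thesis
    using polarized[of a "b + d" c] polarized[of a b c] polarized[of a d c]
    by (simp add: add.assoc)
qed

lemma medial_if_square_mul:
  assumes square_mul: "\<And>x y. mul (mul x y) (mul x y) = mul (mul x x) (mul y y)"
    and no_2_torsion: "\<And>v::'a. v + v = 0 \<Longrightarrow> v = 0"
    and no_3_torsion: "\<And>v::'a. v + v + v = 0 \<Longrightarrow> v = 0"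
  shows "mul (mul a b) (mul c d) = mul (mul a c) (mul b d)"
proof -
  let ?A = "mul (mul a b) (mul c d)" and ?B = "mul (mul a c) (mul b d)"
    and ?C = "mul (mul a d) (mul c b)"
  note polarized = square_mul_polarize[OF square_mul no_2_torsion]
  have sum_AC: "?A + ?C = ?B + ?B"
    by (rule polarized)
  have sum_BC: "?B + ?C = ?A + ?A"
    using polarized[of a c b d] mul_commute[of b c] by simp
  have "(?A - ?B) + (?A - ?B) + (?A - ?B) = (?A + ?A - ?B) - (?B + ?B - ?A)"
    by (simp add: algebra_simps)
  also have "\<dots> = ?C - ?C"
    by (simp flip: sum_AC sum_BC)
  finally have "(?A - ?B) + (?A - ?B) + (?A - ?B) = 0"
    by simp
  then have "?A - ?B = 0"
    by (rule no_3_torsion)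
  then show ?thesis
    by simp
qed

end

theorem proposition3p1:
  fixes scale :: "'k::field \<Rightarrow> 'a::ab_group_add \<Rightarrow> 'a"
    and mul :: "'a \<Rightarrow> 'a \<Rightarrow> 'a"
  assumes vs: "vector_space scale"
    and char2: "(2::'k) \<noteq> 0"
    and char3: "(3::'k) \<noteq> 0"
    and add_left: "\<And>x y z. mul (x + y) z = mul x z + mul y z"
    and scale_left: "\<And>c x y. mul (scale c x) y = scale c (mul x y)"
    and comm: "\<And>x y. mul x y = mul y x"
  shows "(\<forall>x y. mul (mul x y) (mul x y) = mul (mul x x) (mul y y)) \<longleftrightarrow>
         (\<forall>x y z w. mul (mul x y) (mul z w) = mul (mul x z) (mul y w))"
proof
  assume "\<forall>x y z w. mul (mul x y) (mul z w) = mul (mul x z) (mul y w)"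
  then show "\<forall>x y. mul (mul x y) (mul x y) = mul (mul x x) (mul y y)"
    by blast
next
  assume square_mul: "\<forall>x y. mul (mul x y) (mul x y) = mul (mul x x) (mul y y)"
  interpret comm_biadditive mul
    by standard (fact add_left comm)+
  show "\<forall>x y z w. mul (mul x y) (mul z w) = mul (mul x z) (mul y w)"
    using medial_if_square_mul[OF square_mul[rule_format]
        vector_space.double_eq_0_imp_eq_0[OF vs char2]
        vector_space.triple_eq_0_imp_eq_0[OF vs char3]]
    by (intro allI)
qed

end
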